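(* Let $m>n$ be coprime positive integers, $\lambda\in X$, $\Lambda=x(\lambda)$ and $\alpha=\epsilon_i-\delta_j$ ($i\in[n]$, $j\in[m]$). If $\Lambda\in\Pi_{-\alpha}$, then either $\lambda\in X_{-\alpha}$, or $\alpha=\epsilon_1-\delta_m$ and $\lambda_n=\lambda'_m=0$.
   Context: $X$ is the set of partitions $\lambda=(\lambda_1\ge\dots\ge\lambda_n\ge0)$ with $\lambda_1\le m$, drawn in an $n\times m$ rectangle with rows $\epsilon_1,\dots,\epsilon_n$ top to bottom and columns $\delta_1,\dots,\delta_m$; the diagram consists of boxes $\epsilon_i-\delta_j$ with $j\le\lambda_{n+1-i}$; $\lambda'_j=\#\{i:\lambda_i\ge j\}$. $X_{-\alpha}$ is the set of $\lambda$ for which the box $\alpha$ is an inner corner (in $\lambda$, and removing it gives an element of $X$). $x(\lambda)=(a_1,\dots,a_n|b_1,\dots,b_m)$ with $a_i=m(n-i)+n\lambda_{n+1-i}$, $b_j=n(j-1)+m\lambda'_j$. $\Pi_{-\alpha}=\{\Lambda: a_i-b_j=n-m\}$. *)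

theory Defs
  imports Main
begin

text \<open>Partitions lam = (lam 1 >= ... >= lam n >= 0) with lam 1 <= m, represented as
  functions nat => nat that vanish outside {1..n}.\<close>
definition partX :: "nat \<Rightarrow> nat \<Rightarrow> (nat \<Rightarrow> nat) set" where
  "partX n m = {lam. (\<forall>k. (k = 0 \<or> n < k) \<longrightarrow> lam k = 0)
                    \<and> (\<forall>k. 1 \<le> k \<and> k < n \<longrightarrow> lam (Suc k) \<le> lam k)
                    \<and> lam 1 \<le> m}"

definition conjp :: "nat \<Rightarrow> (nat \<Rightarrow> nat) \<Rightarrow> nat \<Rightarrow> nat" where
  "conjp n lam j = card {i \<in> {1..n}. j \<le> lam i}"

text \<open>Young diagram in the n x m rectangle: box (i,j) stands for eps_i - delta_j,
  present iff j <= lam (n+1-i).\<close>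
definition diagram :: "nat \<Rightarrow> nat \<Rightarrow> (nat \<Rightarrow> nat) \<Rightarrow> (nat \<times> nat) set" where
  "diagram n m lam = {(i, j). i \<in> {1..n} \<and> j \<in> {1..m} \<and> j \<le> lam (n + 1 - i)}"

definition Xminus :: "nat \<Rightarrow> nat \<Rightarrow> nat \<times> nat \<Rightarrow> (nat \<Rightarrow> nat) set" where
  "Xminus n m \<alpha> = {lam. lam \<in> partX n m \<and> \<alpha> \<in> diagram n m lam
                      \<and> (\<exists>mu \<in> partX n m. diagram n m mu = diagram n m lam - {\<alpha>})}"

text \<open>Coordinates of x(lam) = (a_1..a_n | b_1..b_m).\<close>
definition acoord :: "nat \<Rightarrow> nat \<Rightarrow> (nat \<Rightarrow> nat) \<Rightarrow> nat \<Rightarrow> int" where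
  "acoord n m lam i = int m * (int n - int i) + int n * int (lam (n + 1 - i))"

definition bcoord :: "nat \<Rightarrow> nat \<Rightarrow> (nat \<Rightarrow> nat) \<Rightarrow> nat \<Rightarrow> int" where
  "bcoord n m lam j = int n * (int j - 1) + int m * int (conjp n lam j)"

definition inPi :: "nat \<Rightarrow> nat \<Rightarrow> (nat \<Rightarrow> nat) \<Rightarrow> nat \<times> nat \<Rightarrow> bool" where
  "inPi n m lam \<alpha> = (acoord n m lam (fst \<alpha>) - bcoord n m lam (snd \<alpha>) = int n - int m)"

end

theory Submission
  imports Defs
begin

text \<open>Write \<open>r = n + 1 - i\<close> for the row of \<open>\<lambda>\<close> containing the box \<open>\<alpha> = \<epsilon>\<^sub>i - \<delta>\<^sub>j\<close>.
  The condition \<open>a\<^sub>i - b\<^sub>j = n - m\<close> becomes \<open>m (r - \<lambda>'\<^sub>j) = n (j - \<lambda>\<^sub>r)\<close>, so by coprimality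
  \<open>m\<close> divides \<open>j - \<lambda>\<^sub>r\<close>, which lies in \<open>(-m, m]\<close>. Either \<open>j = \<lambda>\<^sub>r\<close> and \<open>\<lambda>'\<^sub>j = r\<close>: then
  \<open>\<lambda>\<^sub>r\<close> is the last part of length \<open>j\<close>, so \<open>\<alpha>\<close> is an inner corner. Or \<open>j - \<lambda>\<^sub>r = m\<close>: then
  \<open>j = m\<close>, \<open>\<lambda>\<^sub>r = 0\<close> and \<open>r - \<lambda>'\<^sub>m = n\<close>, forcing \<open>r = n\<close> and \<open>\<lambda>'\<^sub>m = 0\<close>.\<close>

lemma partX_antimono:
  assumes "lam \<in> partX n m" "1 \<le> k" "k \<le> l" "l \<le> n"
  shows "lam l \<le> lam k"
  using assms(3,4)
proof (induction l rule: dec_induct)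
  case base then show ?case by simp
next
  case (step l)
  have "lam (Suc l) \<le> lam l" using assms(1,2) step by (auto simp: partX_def)
  then show ?case using step by simp
qed

lemma partX_le_width:
  assumes "lam \<in> partX n m"
  shows "lam k \<le> m"
proof (cases "k = 0 \<or> n < k")
  case True
  then show ?thesis using assms by (auto simp: partX_def)
next
  case False
  then show ?thesis using partX_antimono[OF assms, of 1 k] assms by (auto simp: partX_def)
qed

lemma conjp_le: "conjp n lam j \<le> n"
proof -
  have "card {i \<in> {1..n}. j \<le> lam i} \<le> card {1..n}" by (rule card_mono) auto
  then show ?thesis by (simp add: conjp_def)
qed

lemma conjp_ge:
  assumes "lam \<in> partX n m" "1 \<le> s" "s \<le> n" "j \<le> lam s"
  shows "s \<le> conjp n lam j"
proof -
  have "{1..s} \<subseteq> {i \<in> {1..n}. j \<le> lam i}"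
    using partX_antimono[OF assms(1)] assms by (auto intro: order_trans)
  then have "card {1..s} \<le> card {i \<in> {1..n}. j \<le> lam i}" by (rule card_mono[rotated]) auto
  then show ?thesis by (simp add: conjp_def)
qed

lemma partX_strict_if_conjp_eq:
  assumes "lam \<in> partX n m" "1 \<le> r" "r < n" "conjp n lam (lam r) = r"
  shows "lam (Suc r) < lam r"
proof (rule ccontr)
  assume "\<not> lam (Suc r) < lam r"
  then have "Suc r \<le> conjp n lam (lam r)" using assms by (intro conjp_ge) auto
  then show False using assms(4) by simp
qed

lemma partX_decrement:
  assumes "lam \<in> partX n m" "1 \<le> r" "r \<le> n"
    and "r < n \<Longrightarrow> lam (Suc r) < lam r"
  shows "lam(r := lam r - 1) \<in> partX n m"
proof -
  define mu where "mu = lam(r := lam r - 1)"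
  have "mu (Suc k) \<le> mu k" if "1 \<le> k" "k < n" for k
    using assms that unfolding mu_def by (cases "k = r"; cases "Suc k = r") (auto simp: partX_def)
  then have "mu \<in> partX n m" using assms(1-3) by (auto simp: partX_def mu_def)
  then show ?thesis by (simp add: mu_def)
qed

lemma diagram_decrement:
  assumes "1 \<le> r" "r \<le> n"
  shows "diagram n m (lam(r := lam r - 1)) = diagram n m lam - {(n + 1 - r, lam r)}"
  using assms by (auto simp: diagram_def split: if_splits)

lemma inner_corner_in_Xminus:
  assumes "lam \<in> partX n m" "i \<in> {1..n}" "j \<in> {1..m}" "j = lam (n + 1 - i)"
    and "n + 1 - i < n \<Longrightarrow> lam (Suc (n + 1 - i)) < j"
  shows "lam \<in> Xminus n m (i, j)"
proof -
  define r where "r = n + 1 - i"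
  have r: "1 \<le> r" "r \<le> n" using assms(2) by (auto simp: r_def)
  have "lam(r := lam r - 1) \<in> partX n m"
    using assms r by (intro partX_decrement) (auto simp: r_def)
  moreover have "diagram n m (lam(r := lam r - 1)) = diagram n m lam - {(i, j)}"
  proof -
    have "n + 1 - r = i" using assms(2) by (auto simp: r_def)
    then show ?thesis using diagram_decrement[OF r] assms(4) by (simp add: r_def)
  qed
  moreover have "(i, j) \<in> diagram n m lam" using assms(2-4) by (auto simp: diagram_def)
  ultimately show ?thesis using assms(1) unfolding Xminus_def by blast
qed

lemma inPi_iff:
  assumes "i \<in> {1..n}"
  shows "inPi n m lam (i, j) \<longleftrightarrow>
    int m * (int (n + 1 - i) - int (conjp n lam j)) = int n * (int j - int (lam (n + 1 - i)))"
  using assms unfolding inPi_def acoord_def bcoord_def by (simp add: algebra_simps)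

lemma int_multiple_in_half_open_range:
  assumes "int m dvd y" "- int m < y" "y \<le> int m"
  shows "y = 0 \<or> y = int m"
proof -
  obtain t where t: "y = int m * t" using assms(1) by (auto elim: dvdE)
  have "m > 0" using assms(2,3) by simp
  have "- 1 < t"
  proof (rule ccontr)
    assume "\<not> - 1 < t"
    then have "int m * t \<le> int m * (- 1)" using \<open>m > 0\<close> by (intro mult_left_mono) auto
    then show False using assms(2) t by simp
  qed
  moreover have "t \<le> 1"
  proof (rule ccontr)
    assume "\<not> t \<le> 1"
    then have "int m * 2 \<le> int m * t" using \<open>m > 0\<close> by (intro mult_left_mono) auto
    then show False using assms(3) \<open>m > 0\<close> t by simp
  qed
  ultimately have "t = 0 \<or> t = 1" by auto
  then show ?thesis using t by auto
qed

theorem lemma4p6: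
  fixes n m i j :: nat and lam :: "nat \<Rightarrow> nat"
  assumes "0 < n" and "n < m" and "coprime m n"
    and "lam \<in> partX n m"
    and "i \<in> {1..n}" and "j \<in> {1..m}"
    and "inPi n m lam (i, j)"
  shows "lam \<in> Xminus n m (i, j) \<or>
         ((i, j) = (1, m) \<and> lam n = 0 \<and> conjp n lam m = 0)"
proof -
  define r where "r = n + 1 - i"
  define c where "c = conjp n lam j"
  have r: "1 \<le> r" "r \<le> n" using assms(5) by (auto simp: r_def)
  have balance: "int m * (int r - int c) = int n * (int j - int (lam r))"
    using inPi_iff[OF assms(5)] assms(7) by (simp add: r_def c_def)
  have "coprime (int m) (int n)" using assms(3) by simp
  then have "int m dvd int j - int (lam r)"
    using balance by (metis coprime_dvd_mult_right_iff dvd_triv_left)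
  moreover have "lam r \<le> m" using partX_le_width[OF assms(4)] .
  ultimately have "int j - int (lam r) = 0 \<or> int j - int (lam r) = int m"
    using assms(6) by (intro int_multiple_in_half_open_range) auto
  then show ?thesis
  proof
    assume corner: "int j - int (lam r) = 0"
    then have "r = c" using balance assms(2) by simp
    then have "r < n \<Longrightarrow> lam (Suc r) < lam r"
      using corner r assms(4) by (intro partX_strict_if_conjp_eq) (auto simp: c_def)
    then show ?thesis
      using corner assms(4-6) by (intro disjI1 inner_corner_in_Xminus) (auto simp: r_def)
  next
    assume "int j - int (lam r) = int m"
    then have "j = m" "lam r = 0" using assms(6) by auto
    then have "int r - int c = int n" using balance assms(2) by simp
    then have "r = n" "c = 0" using r conjp_le[of n lam j] by (auto simp: c_def)
    then show ?thesis using \<open>j = m\<close> \<open>lam r = 0\<close> assms(5) by (auto simp: r_def c_def)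
  qed
qed

end
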